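(* Let $\mathbf{x}_i\in\chi$ be a constellation point whose Voronoi region $\mathcal{D}_{i,\mathrm{ML}}$ is unbounded. Let $\mathbf{x}_p,\mathbf{x}_q\in\chi$ be the two points of $\chi$ that are adjacent to $\mathbf{x}_i$ along the boundary of $\mathrm{conv}\,\chi$, i.e., the points of $\chi\cap\partial(\mathrm{conv}\,\chi)$ immediately preceding and following $\mathbf{x}_i$ when this boundary is traversed cyclically. Then $\mathcal{D}_{i,\mathrm{DP}}$ is a polyhedral angle with vertex $\mathbf{x}_i$: there is a closed pointed convex cone $K\neq\{\mathbf{0}\}$ in $\mathbb{R}^2$ with $\mathcal{D}_{i,\mathrm{DP}}=\mathbf{x}_i+K$, and $K$ is bounded by two rays (which coincide when $\mathbf{x}_i$ is not a vertex of $\mathrm{conv}\,\chi$), one orthogonal to $\mathbf{x}_i-\mathbf{x}_p$ and the other orthogonal to $\mathbf{x}_i-\mathbf{x}_q$.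
   Context: A constellation is a finite set $\chi=\{\mathbf{x}_1,\dots,\mathbf{x}_M\}\subset\mathbb{R}^2$ of distinct points, $M\ge 3$, not all lying on one line. The Voronoi region of $\mathbf{x}_i$ is $\mathcal{D}_{i,\mathrm{ML}}=\{\mathbf{x}\in\mathbb{R}^2:\|\mathbf{x}-\mathbf{x}_i\|\le\|\mathbf{x}-\mathbf{x}_j\|\ \forall j\}$. Two distinct points $\mathbf{x}_i,\mathbf{x}_j$ are neighbors if their Voronoi regions share an edge (a common boundary segment or ray of positive length); $\mathcal{S}_i$ denotes the set of neighbors of $\mathbf{x}_i$. With $\mathbf{a}_{i,j}=\mathbf{x}_i-\mathbf{x}_j$, $b_{i,j}=\mathbf{a}_{i,j}^T(\mathbf{x}_i+\mathbf{x}_j)/2$ and $c_{i,j}=\|\mathbf{x}_i-\mathbf{x}_j\|^2/2$, one has $\mathcal{D}_{i,\mathrm{ML}}=\{\mathbf{x}:\mathbf{a}_{i,j}^T\mathbf{x}\ge b_{i,j}\ \forall \mathbf{x}_j\in\mathcal{S}_i\}$, and the distance preserving constructive interference region (DPCIR) of $\mathbf{x}_i$ is $\mathcal{D}_{i,\mathrm{DP}}=\{\mathbf{x}\in\mathbb{R}^2:\mathbf{a}_{i,j}^T\mathbf{x}\ge b_{i,j}+c_{i,j}\ \forall \mathbf{x}_j\in\mathcal{S}_i\}=\{\mathbf{x}:(\mathbf{x}_i-\mathbf{x}_j)^T(\mathbf{x}-\mathbf{x}_i)\ge 0\ \forall\mathbf{x}_j\in\mathcal{S}_i\}$. $\mathrm{conv}\,\chi$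 is the convex hull of $\chi$. *)

theory Defs
  imports "HOL-Analysis.Analysis"
begin

type_synonym pt = "real^2"

definition constellation :: "pt set \<Rightarrow> bool" where
  "constellation C \<longleftrightarrow> finite C \<and> card C \<ge> 3 \<and> \<not> collinear C"

definition voronoi :: "pt set \<Rightarrow> pt \<Rightarrow> pt set" where
  "voronoi C xi = {x. \<forall>xj\<in>C. dist x xi \<le> dist x xj}"

text \<open>Neighbors: distinct points whose Voronoi regions share a boundary piece
  (segment or ray) of positive length, i.e. contain a common nondegenerate segment.\<close>
definition neighbors :: "pt set \<Rightarrow> pt \<Rightarrow> pt set" where
  "neighbors C xi = {xj \<in> C. xj \<noteq> xi \<and>
     (\<exists>u v. u \<noteq> v \<and> closed_segment u v \<subseteq> voronoi C xi \<inter> voronoi C xj)}"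

definition dpcir :: "pt set \<Rightarrow> pt \<Rightarrow> pt set" where
  "dpcir C xi = {x. \<forall>xj\<in>neighbors C xi. (xi - xj) \<bullet> (x - xi) \<ge> 0}"

text \<open>y is a point of C adjacent to xi along the boundary of conv C: the segment
  from xi to y lies in the boundary of the hull and contains no other point of C.\<close>
definition hull_adjacent :: "pt set \<Rightarrow> pt \<Rightarrow> pt \<Rightarrow> bool" where
  "hull_adjacent C xi y \<longleftrightarrow> y \<in> C \<and> y \<noteq> xi \<and>
     closed_segment xi y \<subseteq> frontier (convex hull C) \<and> open_segment xi y \<inter> C = {}"

end

theory Submission
  imports Defs
begin

text \<open>
  The DPCIR of x_i is x_i + P, where P is the polar cone of the directions y - x_i towards the
  Voronoi neighbours y of x_i. A point x_p adjacent to x_i along the hull boundary is a neighbour: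
  far out along the outer normal of the hull edge [x_i, x_p], the points of its perpendicular
  bisector are closer to x_i and x_p than to any other constellation point. The supporting line of
  that edge keeps the whole constellation on one side.

  If x_i is a vertex of the hull, the supporting lines of its two hull edges confine every
  neighbour direction to the cone spanned by x_p - x_i and x_q - x_i, so P is the wedge bounded by
  the two rays orthogonal to these vectors. If x_i lies inside a hull edge, x_p - x_i and
  x_q - x_i are opposite; as the constellation is not collinear, some neighbour lies strictly on
  the inner side of the edge, and P is the single ray along the outer normal of the edge.
\<close>

section \<open>Planar vectors and polar cones\<close>

definition cross2 :: "real^2 \<Rightarrow> real^2 \<Rightarrow> real" where
  "cross2 a b = a$1 * b$2 - a$2 * b$1"

definition rot90 :: "real^2 \<Rightarrow> real^2" where
  "rot90 a = vector [- (a$2), a$1]"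

lemma inner_real2: "(x :: real^2) \<bullet> y = x$1 * y$1 + x$2 * y$2"
  by (simp add: inner_vec_def sum_2)

lemma vec_eq_real2_iff: "(x :: real^2) = y \<longleftrightarrow> x$1 = y$1 \<and> x$2 = y$2"
  by (simp add: vec_eq_iff forall_2)

lemma cross2_antisym: "cross2 a b = - cross2 b a"
  by (simp add: cross2_def)

lemma cross2_self [simp]: "cross2 a a = 0"
  by (simp add: cross2_def)

lemma inner_rot90_left: "rot90 a \<bullet> x = cross2 a x"
  by (simp add: inner_real2 rot90_def cross2_def)

lemma inner_rot90_right: "x \<bullet> rot90 a = cross2 a x"
  by (subst inner_commute) (rule inner_rot90_left)

lemma rot90_eq_0_iff [simp]: "rot90 a = 0 \<longleftrightarrow> a = 0"
  by (auto simp: vec_eq_real2_iff rot90_def)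

lemma cross2_eq_0_if_common_normal:
  assumes "n \<noteq> 0" "n \<bullet> u = 0" "n \<bullet> v = 0"
  shows "cross2 u v = 0"
proof -
  have "n$1 * cross2 u v = 0" "n$2 * cross2 u v = 0"
    using assms(2,3) unfolding inner_real2 cross2_def by algebra+
  then show ?thesis
    using assms(1) by (auto simp: vec_eq_real2_iff)
qed

lemma cross2_eq_0_imp_parallel:
  assumes "cross2 u v = 0" "u \<noteq> 0"
  shows "v = ((u \<bullet> v) / (u \<bullet> u)) *\<^sub>R u"
proof -
  have "u \<bullet> u \<noteq> 0"
    using assms(2) by simp
  moreover have "(u \<bullet> v) * u$1 = v$1 * (u \<bullet> u)" "(u \<bullet> v) * u$2 = v$2 * (u \<bullet> u)"
    using assms(1) unfolding inner_real2 cross2_def by algebra+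
  ultimately show ?thesis
    by (simp add: vec_eq_real2_iff field_simps)
qed

lemma common_normal_imp_parallel:
  fixes n u v :: "real^2"
  assumes "n \<noteq> 0" "n \<bullet> u = 0" "n \<bullet> v = 0" "u \<noteq> 0"
  obtains s where "v = s *\<^sub>R u"
  using cross2_eq_0_imp_parallel[OF cross2_eq_0_if_common_normal[OF assms(1-3)] assms(4)] by blast

lemma orthogonal_eq_scaled_rot90:
  assumes "p \<noteq> 0" "n \<bullet> p = 0"
  obtains k where "n = k *\<^sub>R rot90 p"
  using common_normal_imp_parallel[of p "rot90 p" n] assms
  by (auto simp: inner_rot90_right inner_commute[of p n])

lemma cross2_decomposition:
  assumes "cross2 p q \<noteq> 0"
  shows "d = (cross2 d q / cross2 p q) *\<^sub>R p + (cross2 p d / cross2 p q) *\<^sub>R q"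
proof -
  have "cross2 d q * p$1 + cross2 p d * q$1 = d$1 * cross2 p q"
       "cross2 d q * p$2 + cross2 p d * q$2 = d$2 * cross2 p q"
    by (simp_all add: cross2_def algebra_simps)
  with assms show ?thesis
    by (simp add: vec_eq_real2_iff field_simps)
qed

lemma divide_nonneg_if_common_factor:
  fixes a b k :: real
  assumes "0 \<le> k * a" "0 < k * b"
  shows "0 \<le> a / b"
proof -
  have "0 \<le> (k * a) / (k * b)"
    by (rule divide_nonneg_pos[OF assms])
  also have "(k * a) / (k * b) = a / b"
    using assms(2) by auto
  finally show ?thesis .
qed

lemma nonneg_combination_if_supporting_normals:
  fixes p q d n1 n2 :: "real^2"
  assumes "cross2 p q \<noteq> 0"
    and "n1 \<noteq> 0" "n1 \<bullet> p = 0" "n1 \<bullet> q \<ge> 0" "n1 \<bullet> d \<ge> 0"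
    and "n2 \<noteq> 0" "n2 \<bullet> q = 0" "n2 \<bullet> p \<ge> 0" "n2 \<bullet> d \<ge> 0"
  shows "\<exists>\<alpha> \<beta>. \<alpha> \<ge> 0 \<and> \<beta> \<ge> 0 \<and> d = \<alpha> *\<^sub>R p + \<beta> *\<^sub>R q"
proof -
  define c where "c = cross2 p q"
  have "p \<noteq> 0" "q \<noteq> 0"
    using assms(1) by (auto simp: cross2_def)
  \<comment> \<open>By Cramer's rule the coefficients of d are cross2 p d / c and cross2 d q / c; their signs
    are those of n1 \<bullet> d and n2 \<bullet> d relative to n1 \<bullet> q and n2 \<bullet> p.\<close>
  obtain k1 where n1: "n1 = k1 *\<^sub>R rot90 p"
    using orthogonal_eq_scaled_rot90[OF \<open>p \<noteq> 0\<close> assms(3)] .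
  obtain k2 where n2: "n2 = k2 *\<^sub>R rot90 q"
    using orthogonal_eq_scaled_rot90[OF \<open>q \<noteq> 0\<close> assms(7)] .
  have "k1 \<noteq> 0" "k2 \<noteq> 0"
    using assms(2,6) n1 n2 by auto
  have "0 < k1 * c"
    using assms(1,4) \<open>k1 \<noteq> 0\<close> by (simp add: n1 c_def inner_rot90_left less_le)
  moreover have "0 \<le> k1 * cross2 p d"
    using assms(5) by (simp add: n1 inner_rot90_left)
  ultimately have "0 \<le> cross2 p d / c"
    by (rule divide_nonneg_if_common_factor[rotated])
  have "0 < (- k2) * c"
    using assms(1,8) \<open>k2 \<noteq> 0\<close> by (simp add: n2 c_def inner_rot90_left cross2_antisym[of q p] less_le)
  moreover have "0 \<le> (- k2) * cross2 d q"
    using assms(9) by (simp add: n2 inner_rot90_left cross2_antisym[of q d])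
  ultimately have "0 \<le> cross2 d q / c"
    by (rule divide_nonneg_if_common_factor[rotated])
  with \<open>0 \<le> cross2 p d / c\<close> show ?thesis
    using cross2_decomposition[OF assms(1), of d] unfolding c_def by blast
qed

lemma polar_of_two_generators:
  fixes D :: "'a::real_inner set"
  assumes "p \<in> D" "q \<in> D" "\<And>d. d \<in> D \<Longrightarrow> \<exists>\<alpha> \<beta>. \<alpha> \<ge> 0 \<and> \<beta> \<ge> 0 \<and> d = \<alpha> *\<^sub>R p + \<beta> *\<^sub>R q"
  shows "{v. \<forall>d\<in>D. d \<bullet> v \<le> 0} = {v. p \<bullet> v \<le> 0 \<and> q \<bullet> v \<le> 0}"
proof (intro set_eqI iffI; clarsimp)
  fix v d assume "p \<bullet> v \<le> 0" "q \<bullet> v \<le> 0" "d \<in> D"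
  then obtain \<alpha> \<beta> where "\<alpha> \<ge> 0" "\<beta> \<ge> 0" "d = \<alpha> *\<^sub>R p + \<beta> *\<^sub>R q"
    using assms(3) by blast
  with \<open>p \<bullet> v \<le> 0\<close> \<open>q \<bullet> v \<le> 0\<close> show "d \<bullet> v \<le> 0"
    by (simp add: inner_add_left add_nonpos_nonpos mult_nonneg_nonpos)
qed (use assms(1,2) in auto)

lemma polar_of_opposite_generators:
  fixes D :: "(real^2) set"
  assumes "p \<in> D" "\<mu> *\<^sub>R p \<in> D" "\<mu> < 0" "p \<noteq> 0"
    and "n \<bullet> p = 0" "\<And>d. d \<in> D \<Longrightarrow> n \<bullet> d \<ge> 0" "e \<in> D" "n \<bullet> e > 0"
  shows "{v. \<forall>d\<in>D. d \<bullet> v \<le> 0} = {v. p \<bullet> v = 0 \<and> n \<bullet> v \<le> 0}"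
proof -
  have "n \<noteq> 0"
    using assms(8) by auto
  have parallel: "\<exists>s. v = s *\<^sub>R n" if "p \<bullet> v = 0" for v
    using common_normal_imp_parallel[of p n v] assms(4,5) \<open>n \<noteq> 0\<close> that
    by (metis inner_commute)
  show ?thesis
  proof (intro set_eqI iffI; clarsimp)
    fix v assume v: "\<forall>d\<in>D. d \<bullet> v \<le> 0"
    then have "p \<bullet> v \<le> 0" "\<mu> * (p \<bullet> v) \<le> 0"
      using assms(1,2) by force+
    then have "p \<bullet> v = 0"
      using assms(3) by (simp add: mult_le_0_iff)
    moreover obtain s where "v = s *\<^sub>R n"
      using parallel calculation by blast
    moreover have "s * (e \<bullet> n) \<le> 0"
      using v assms(7) \<open>v = s *\<^sub>R n\<close> by force
    then have "s \<le> 0"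
      using assms(8) by (simp add: mult_le_0_iff inner_commute)
    ultimately show "p \<bullet> v = 0 \<and> n \<bullet> v \<le> 0"
      by (simp add: mult_nonpos_nonneg)
  next
    fix v d assume "p \<bullet> v = 0" "n \<bullet> v \<le> 0" "d \<in> D"
    then obtain s where "v = s *\<^sub>R n"
      using parallel by blast
    with \<open>n \<bullet> v \<le> 0\<close> have "s * (n \<bullet> n) \<le> 0"
      by simp
    with \<open>n \<noteq> 0\<close> have "s \<le> 0"
      by (meson inner_gt_zero_iff mult_pos_pos not_le)
    with \<open>v = s *\<^sub>R n\<close> assms(6)[OF \<open>d \<in> D\<close>] show "d \<bullet> v \<le> 0"
      by (simp add: mult_nonpos_nonneg inner_commute)
  qed
qed

lemma parallel_not_between_imp_opposite:
  fixes a b c :: "'a::real_vector"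
  assumes "c - a = \<mu> *\<^sub>R (b - a)" "b \<noteq> a" "c \<noteq> a" "b \<noteq> c"
    and "c \<notin> open_segment a b" "b \<notin> open_segment a c"
  shows "\<mu> < 0"
proof (rule ccontr)
  assume "\<not> \<mu> < 0"
  then consider "\<mu> = 0" | "0 < \<mu>" "\<mu> < 1" | "\<mu> = 1" | "\<mu> > 1"
    by linarith
  then show False
  proof cases
    case 1
    with assms(1,3) show False
      by simp
  next
    case 2
    have "c = (1 - \<mu>) *\<^sub>R a + \<mu> *\<^sub>R b"
      using assms(1) by (simp add: algebra_simps)
    with 2 assms(2,5) show False
      by (auto simp: in_segment)
  next
    case 3
    with assms(1,4) show False
      by simp
  next
    case 4
    then have "b - a = (1 / \<mu>) *\<^sub>R (c - a)"
      using assms(1) by simp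
    then have "b = (1 - 1 / \<mu>) *\<^sub>R a + (1 / \<mu>) *\<^sub>R c"
      by (simp add: algebra_simps)
    moreover have "0 < 1 / \<mu>" "1 / \<mu> < 1"
      using 4 by auto
    ultimately have "b \<in> open_segment a c"
      unfolding in_segment using assms(3) by blast
    with assms(6) show False ..
  qed
qed

lemma not_collinear_imp_off_hyperplane:
  fixes C :: "(real^2) set"
  assumes "\<not> collinear C" "n \<noteq> 0"
  obtains y where "y \<in> C" "n \<bullet> y \<noteq> b"
proof -
  have "\<not> C \<subseteq> {x. n \<bullet> x = b}"
  proof
    assume "C \<subseteq> {x. n \<bullet> x = b}"
    then have "aff_dim C \<le> aff_dim {x. n \<bullet> x = b}"
      by (rule aff_dim_subset)
    with assms show False
      by (simp add: collinear_aff_dim)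
  qed
  then show ?thesis
    using that by blast
qed

section \<open>Voronoi neighbours\<close>

lemma dist_le_iff_inner:
  fixes z a b :: "'a::real_inner"
  shows "dist z a \<le> dist z b \<longleftrightarrow> 2 * ((z - a) \<bullet> (b - a)) \<le> (b - a) \<bullet> (b - a)"
proof -
  have "dist z a \<le> dist z b \<longleftrightarrow> (z - a) \<bullet> (z - a) \<le> ((z - a) - (b - a)) \<bullet> ((z - a) - (b - a))"
    by (simp add: dist_norm norm_le)
  also have "\<dots> \<longleftrightarrow> 2 * ((z - a) \<bullet> (b - a)) \<le> (b - a) \<bullet> (b - a)"
    by (simp add: inner_diff_left inner_diff_right inner_commute) linarith
  finally show ?thesis .
qed

lemma dist_eq_iff_inner:
  fixes z a b :: "'a::real_inner"
  shows "dist z a = dist z b \<longleftrightarrow> 2 * ((z - a) \<bullet> (b - a)) = (b - a) \<bullet> (b - a)"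
proof -
  have "dist z a = dist z b \<longleftrightarrow> (z - a) \<bullet> (z - a) = ((z - a) - (b - a)) \<bullet> ((z - a) - (b - a))"
    by (simp add: dist_norm norm_eq)
  also have "\<dots> \<longleftrightarrow> 2 * ((z - a) \<bullet> (b - a)) = (b - a) \<bullet> (b - a)"
    by (simp add: inner_diff_left inner_diff_right inner_commute) linarith
  finally show ?thesis .
qed

lemma dist_less_iff_inner:
  fixes z a b :: "'a::real_inner"
  shows "dist z a < dist z b \<longleftrightarrow> 2 * ((z - a) \<bullet> (b - a)) < (b - a) \<bullet> (b - a)"
proof -
  have "dist z a < dist z b \<longleftrightarrow> (z - a) \<bullet> (z - a) < ((z - a) - (b - a)) \<bullet> ((z - a) - (b - a))"
    by (simp add: dist_norm norm_lt)
  also have "\<dots> \<longleftrightarrow> 2 * ((z - a) \<bullet> (b - a)) < (b - a) \<bullet> (b - a)"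
    by (simp add: inner_diff_left inner_diff_right inner_commute) linarith
  finally show ?thesis .
qed

definition closer :: "'a::metric_space \<Rightarrow> 'a \<Rightarrow> 'a set" where
  "closer a b = {x. dist x a \<le> dist x b}"

lemma voronoi_eq_INT_closer: "voronoi C xi = (\<Inter>y\<in>C. closer xi y)"
  by (auto simp: voronoi_def closer_def)

lemma dpcir_eq_translated_polar:
  "dpcir C xi = (\<lambda>v. xi + v) ` {v. \<forall>d\<in>(\<lambda>y. y - xi) ` neighbors C xi. d \<bullet> v \<le> 0}"
proof -
  have "(xi - y) \<bullet> v \<ge> 0 \<longleftrightarrow> (y - xi) \<bullet> v \<le> 0" for y v :: "real^2"
    by (simp add: inner_diff_left)
  then have "dpcir C xi = (\<lambda>v. xi + v) ` {v. \<forall>y\<in>neighbors C xi. (y - xi) \<bullet> v \<le> 0}"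
    by (force simp: dpcir_def image_iff)
  then show ?thesis
    by simp
qed

lemma affine_hull_constellation: "constellation C \<Longrightarrow> affine hull C = UNIV"
proof -
  assume "constellation C"
  then have "aff_dim C > 1"
    using collinear_aff_dim by (fastforce simp: constellation_def)
  moreover have "aff_dim C \<le> 2"
    using aff_dim_le_DIM[of C] by simp
  ultimately have "aff_dim C = int DIM(real^2)"
    by simp
  then show ?thesis
    using aff_dim_eq_full by blast
qed

lemma hull_adjacent_supporting_normal:
  assumes "constellation C" "xi \<in> C" "hull_adjacent C xi xp"
  obtains n where "n \<noteq> 0" "n \<bullet> (xp - xi) = 0" "\<And>y. y \<in> C \<Longrightarrow> n \<bullet> (y - xi) \<ge> 0"
proof -
  define S where "S = convex hull C"
  have xp: "xp \<in> C" and "closed_segment xi xp \<subseteq> frontier S"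
    using assms(3) by (auto simp: hull_adjacent_def S_def)
  then have m: "midpoint xi xp \<in> frontier S"
    using midpoint_in_closed_segment by blast
  have "closed S"
    using assms(1) unfolding S_def constellation_def
    by (simp add: finite_imp_compact compact_convex_hull compact_imp_closed)
  have "rel_interior S = interior S"
    using affine_hull_constellation[OF assms(1)]
    by (simp add: S_def rel_interior_interior)
  then have "midpoint xi xp \<in> closure S" "midpoint xi xp \<notin> rel_interior S"
    using m by (auto simp: frontier_def)
  then obtain a where "a \<noteq> 0" and a: "\<And>y. y \<in> S \<Longrightarrow> a \<bullet> midpoint xi xp \<le> a \<bullet> y"
    using supporting_hyperplane_relative_frontier[of S "midpoint xi xp"] closure_closed[OF \<open>closed S\<close>]
    unfolding S_def by (metis convex_convex_hull)
  have CS: "C \<subseteq> S"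
    unfolding S_def by (rule hull_subset)
  have "a \<bullet> midpoint xi xp = (a \<bullet> xi + a \<bullet> xp) / 2"
    by (simp add: midpoint_def inner_add_right)
  moreover have "a \<bullet> midpoint xi xp \<le> a \<bullet> xi" "a \<bullet> midpoint xi xp \<le> a \<bullet> xp"
    using a CS assms(2) xp by blast+
  ultimately have "a \<bullet> xi = a \<bullet> midpoint xi xp" "a \<bullet> xp = a \<bullet> midpoint xi xp"
    by auto
  with a CS show ?thesis
    by (intro that[OF \<open>a \<noteq> 0\<close>]) (auto simp: inner_diff_right)
qed

lemma eventually_closer_along_normal:
  fixes xi xp y n :: "real^2"
  assumes n: "n \<noteq> 0" "n \<bullet> (xp - xi) = 0" "n \<bullet> (y - xi) \<ge> 0"
    and "xp \<noteq> xi" "y \<notin> open_segment xi xp"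
  shows "\<forall>\<^sub>F t in at_top. dist (midpoint xi xp - t *\<^sub>R n) xi \<le> dist (midpoint xi xp - t *\<^sub>R n) y"
proof -
  define p where "p = xp - xi"
  define d where "d = y - xi"
  have closer_iff: "dist (midpoint xi xp - t *\<^sub>R n) xi \<le> dist (midpoint xi xp - t *\<^sub>R n) y
      \<longleftrightarrow> p \<bullet> d - 2 * t * (n \<bullet> d) \<le> d \<bullet> d" for t
  proof -
    have z: "midpoint xi xp - t *\<^sub>R n - xi = (1/2) *\<^sub>R p - t *\<^sub>R n"
      by (simp add: p_def midpoint_def vec_eq_iff field_simps)
    show ?thesis
      unfolding dist_le_iff_inner d_def[symmetric] z by (simp add: inner_diff_left mult.assoc)
  qed
  show ?thesis
  proof (cases "n \<bullet> d = 0")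
    case True
    obtain s where s: "d = s *\<^sub>R p"
      using common_normal_imp_parallel[of n p d] n True assms(4) by (auto simp: p_def d_def)
    have "s \<le> 0 \<or> s \<ge> 1"
    proof (rule ccontr)
      assume "\<not> (s \<le> 0 \<or> s \<ge> 1)"
      then have "0 < s" "s < 1"
        by auto
      moreover have "y = (1 - s) *\<^sub>R xi + s *\<^sub>R xp"
        using s by (simp add: d_def p_def algebra_simps)
      ultimately have "y \<in> open_segment xi xp"
        using assms(4) by (auto simp: in_segment)
      with assms(5) show False ..
    qed
    then have "0 \<le> s * (s - 1)"
      by (auto intro: mult_nonpos_nonpos mult_nonneg_nonneg)
    then have "s \<le> s * s"
      by (simp add: algebra_simps)
    then have "p \<bullet> d \<le> d \<bullet> d"
      using s mult_right_mono[OF \<open>s \<le> s * s\<close>, of "p \<bullet> p"] by (simp add: algebra_simps)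
    with True show ?thesis
      by (simp add: closer_iff)
  next
    case False
    with n(3) have "n \<bullet> d > 0"
      by (simp add: d_def)
    have large: "p \<bullet> d - 2 * t * (n \<bullet> d) \<le> d \<bullet> d" if "(p \<bullet> d - d \<bullet> d) / (2 * (n \<bullet> d)) \<le> t" for t
      using that \<open>n \<bullet> d > 0\<close> by (simp add: divide_le_eq algebra_simps)
    show ?thesis
      using eventually_ge_at_top[of "(p \<bullet> d - d \<bullet> d) / (2 * (n \<bullet> d))"]
      by (rule eventually_mono) (simp add: closer_iff large)
  qed
qed

lemma hull_adjacent_imp_neighbor:
  assumes "constellation C" "xi \<in> C" "hull_adjacent C xi xp"
  shows "xp \<in> neighbors C xi"
proof -
  obtain n where n: "n \<noteq> 0" "n \<bullet> (xp - xi) = 0" "\<And>y. y \<in> C \<Longrightarrow> n \<bullet> (y - xi) \<ge> 0"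
    using hull_adjacent_supporting_normal[OF assms] by blast
  have xp: "xp \<in> C" "xp \<noteq> xi" "open_segment xi xp \<inter> C = {}"
    using assms(3) by (auto simp: hull_adjacent_def)
  define z where "z t = midpoint xi xp - t *\<^sub>R n" for t
  have "\<forall>y\<in>C. \<forall>\<^sub>F t in at_top. dist (z t) xi \<le> dist (z t) y"
    using n xp unfolding z_def by (blast intro: eventually_closer_along_normal)
  then have "\<forall>\<^sub>F t in at_top. \<forall>y\<in>C. dist (z t) xi \<le> dist (z t) y"
    using assms(1) by (simp add: eventually_ball_finite constellation_def)
  then obtain T where T: "\<And>t y. t \<ge> T \<Longrightarrow> y \<in> C \<Longrightarrow> dist (z t) xi \<le> dist (z t) y"
    by (auto simp: eventually_at_top_linorder)
  have equidistant: "dist (z t) xi = dist (z t) xp" for t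
  proof -
    have "2 * ((z t - xi) \<bullet> (xp - xi)) = (xp - xi) \<bullet> (xp - xi)"
      using n(2) by (simp add: z_def midpoint_def algebra_simps inner_diff_left inner_commute)
    then show ?thesis
      by (simp add: dist_eq_iff_inner)
  qed
  have "closed_segment (z T) (z (T + 1)) \<subseteq> voronoi C xi \<inter> voronoi C xp"
  proof
    fix x assume "x \<in> closed_segment (z T) (z (T + 1))"
    then obtain \<mu> where "0 \<le> \<mu>" "x = (1 - \<mu>) *\<^sub>R z T + \<mu> *\<^sub>R z (T + 1)"
      by (auto simp: in_segment)
    moreover have "(1 - \<mu>) *\<^sub>R z T + \<mu> *\<^sub>R z (T + 1) = z (T + \<mu>)"
      by (simp add: z_def algebra_simps)
    ultimately show "x \<in> voronoi C xi \<inter> voronoi C xp"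
      using T[of "T + \<mu>"] equidistant by (auto simp: voronoi_def dist_commute)
  qed
  moreover have "z T \<noteq> z (T + 1)"
    using n(1) by (simp add: z_def)
  ultimately show ?thesis
    using xp by (auto simp: neighbors_def)
qed

lemma exists_equidistant_point_strictly_closer:
  fixes xi xj w :: "'a::real_inner"
  assumes "xj \<noteq> xi" "w \<notin> closer xi xj" "w \<in> (\<Inter>y\<in>T. closer xi y)"
  obtains z where "dist z xi = dist z xj" "\<And>y. y \<in> T \<Longrightarrow> y \<noteq> xi \<Longrightarrow> dist z xi < dist z y"
proof -
  define A where "A y = (w - xi) \<bullet> (y - xi)" for y
  define B where "B y = (y - xi) \<bullet> (y - xi)" for y
  \<comment> \<open>z is taken where the segment from xi to w crosses the bisector of xi and xj.\<close>
  define z where "z \<theta> = xi + \<theta> *\<^sub>R (w - xi)" for \<theta>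
  have z: "(z \<theta> - xi) \<bullet> (y - xi) = \<theta> * A y" for \<theta> y
    by (simp add: z_def A_def)
  have B_pos: "B y > 0" if "y \<noteq> xi" for y
    using that by (simp add: B_def)
  have "2 * A xj > B xj"
    using assms(2) z[of 1] by (simp add: closer_def dist_le_iff_inner A_def B_def z_def)
  moreover have "B xj > 0"
    using B_pos assms(1) .
  ultimately have "A xj > 0"
    by linarith
  define \<theta> where "\<theta> = B xj / (2 * A xj)"
  have "0 < \<theta>" "\<theta> < 1"
    using \<open>2 * A xj > B xj\<close> \<open>B xj > 0\<close> by (auto simp: \<theta>_def field_simps)
  show ?thesis
  proof (rule that[of "z \<theta>"])
    show "dist (z \<theta>) xi = dist (z \<theta>) xj"
      using \<open>A xj > 0\<close> by (simp add: dist_eq_iff_inner z \<theta>_def B_def)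
  next
    fix y assume "y \<in> T" "y \<noteq> xi"
    then have "2 * A y \<le> B y" "B y > 0"
      using assms(3) B_pos
      by (auto simp: closer_def dist_le_iff_inner A_def B_def)
    consider "A y \<le> 0" | "A y > 0"
      by linarith
    then have "2 * (\<theta> * A y) < B y"
    proof cases
      case 1
      then have "\<theta> * A y \<le> 0"
        using \<open>0 < \<theta>\<close> by (simp add: mult_nonneg_nonpos)
      with \<open>B y > 0\<close> show ?thesis
        by linarith
    next
      case 2
      then have "\<theta> * A y < A y"
        using mult_strict_right_mono[OF \<open>\<theta> < 1\<close>] by simp
      with \<open>2 * A y \<le> B y\<close> show ?thesis
        by linarith
    qed
    then show "dist (z \<theta>) xi < dist (z \<theta>) y"
      by (simp add: dist_less_iff_inner z B_def)
  qed
qed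

lemma equidistant_point_strictly_closer_imp_neighbor:
  fixes C S :: "(real^2) set"
  assumes "finite S" "(\<Inter>y\<in>S. closer xi y) = voronoi C xi" "xj \<in> C" "xj \<noteq> xi"
    and "dist z xi = dist z xj" "\<And>y. y \<in> S \<Longrightarrow> y \<notin> {xi, xj} \<Longrightarrow> dist z xi < dist z y"
  shows "xj \<in> neighbors C xi"
proof -
  define U where "U = (\<Inter>y\<in>S - {xi, xj}. {x. dist x xi < dist x y})"
  have "open U"
    unfolding U_def using assms(1)
    by (intro open_INT finite_Diff ballI open_Collect_less) (auto intro: continuous_intros)
  moreover have "z \<in> U"
    using assms(6) by (auto simp: U_def)
  ultimately obtain e where "e > 0" "ball z e \<subseteq> U"
    by (meson openE)
  \<comment> \<open>Sliding z along the bisector keeps it equidistant from xi and xj, while the strict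
    inequalities survive in a small ball.\<close>
  define r where "r = rot90 (xj - xi)"
  have "r \<noteq> 0"
    using assms(4) by (simp add: r_def)
  define d where "d = (e / (2 * norm r)) *\<^sub>R r"
  have "norm d < e"
    using \<open>e > 0\<close> \<open>r \<noteq> 0\<close> by (simp add: d_def)
  define H where "H = {x. (xj - xi) \<bullet> x = (xj - xi) \<bullet> z}"
  have "(xj - xi) \<bullet> d = 0"
    by (simp add: d_def r_def inner_rot90_right)
  then have "z - d \<in> ball z e \<inter> H" "z + d \<in> ball z e \<inter> H"
    using \<open>norm d < e\<close> by (auto simp: H_def dist_norm inner_diff_right inner_add_right)
  then have segment: "closed_segment (z - d) (z + d) \<subseteq> ball z e \<inter> H"
    using convex_hyperplane[of "xj - xi"] unfolding H_def
    by (intro closed_segment_subset convex_Int convex_ball)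
  have in_voronoi: "x \<in> voronoi C xi \<inter> voronoi C xj" if "x \<in> ball z e \<inter> H" for x
  proof -
    have "(xj - xi) \<bullet> x = (xj - xi) \<bullet> z"
      using that by (simp add: H_def)
    then have "(x - xi) \<bullet> (xj - xi) = (z - xi) \<bullet> (xj - xi)"
      by (simp add: inner_diff_left inner_diff_right inner_commute)
    then have "dist x xi = dist x xj"
      using assms(5) by (simp add: dist_eq_iff_inner)
    moreover have "\<forall>y\<in>S - {xi, xj}. dist x xi < dist x y"
      using that \<open>ball z e \<subseteq> U\<close> by (auto simp: U_def)
    ultimately have "x \<in> closer xi y" if "y \<in> S" for y
      using that by (cases "y \<in> {xi, xj}") (auto simp: closer_def less_imp_le)
    then have "x \<in> voronoi C xi"
      unfolding assms(2)[symmetric] by blast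
    then show ?thesis
      using \<open>dist x xi = dist x xj\<close> by (auto simp: voronoi_def)
  qed
  with segment have "closed_segment (z - d) (z + d) \<subseteq> voronoi C xi \<inter> voronoi C xj"
    by blast
  moreover have "z - d \<noteq> z + d"
    using \<open>e > 0\<close> \<open>r \<noteq> 0\<close> by (auto simp: d_def vec_eq_iff)
  ultimately show ?thesis
    using assms(3,4) unfolding neighbors_def by blast
qed

lemma exists_neighbor_on_strict_side:
  fixes C :: "(real^2) set"
  assumes "finite C" "xi \<in> C" "\<And>y. y \<in> C \<Longrightarrow> n \<bullet> (y - xi) \<ge> 0"
    and "y0 \<in> C" "n \<bullet> (y0 - xi) > 0"
  obtains xj where "xj \<in> neighbors C xi" "n \<bullet> (xj - xi) > 0"
proof -
  \<comment> \<open>In a minimal family of bisector half-planes cutting out the Voronoi region no member is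
    redundant, so each one contributes an edge of the region.\<close>
  define represents where "represents S \<longleftrightarrow> S \<subseteq> C \<and> (\<Inter>y\<in>S. closer xi y) = voronoi C xi" for S
  have "represents C"
    by (simp add: represents_def voronoi_eq_INT_closer)
  then obtain S where S: "represents S" and S_min: "\<And>S'. represents S' \<Longrightarrow> card S \<le> card S'"
    using ex_has_least_nat[of represents C card] by blast
  then have "S \<subseteq> C" "finite S" and V: "(\<Inter>y\<in>S. closer xi y) = voronoi C xi"
    using assms(1) finite_subset by (auto simp: represents_def)
  have "\<exists>xj\<in>S. n \<bullet> (xj - xi) > 0"
  proof (rule ccontr)
    assume "\<not> ?thesis"
    with \<open>S \<subseteq> C\<close> assms(3) have on_line: "n \<bullet> (y - xi) = 0" if "y \<in> S" for y
      using that by force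
    define t where "t = ((y0 - xi) \<bullet> (y0 - xi)) / (n \<bullet> (y0 - xi))"
    have "xi + t *\<^sub>R n \<in> closer xi y" if "y \<in> S" for y
      using on_line[OF that] by (simp add: closer_def dist_le_iff_inner)
    then have "xi + t *\<^sub>R n \<in> closer xi y0"
      using V assms(4) by (auto simp: voronoi_eq_INT_closer)
    moreover have "y0 \<noteq> xi"
      using assms(5) by auto
    ultimately show False
      using assms(5) by (simp add: closer_def dist_le_iff_inner t_def)
  qed
  then obtain xj where "xj \<in> S" "n \<bullet> (xj - xi) > 0" ..
  then have "xj \<noteq> xi"
    by auto
  have "\<not> represents (S - {xj})"
    using S_min[of "S - {xj}"] \<open>finite S\<close> \<open>xj \<in> S\<close> card_Diff1_less by fastforce
  moreover have "voronoi C xi \<subseteq> (\<Inter>y\<in>S - {xj}. closer xi y)"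
    using V by blast
  ultimately obtain w where w: "w \<in> (\<Inter>y\<in>S - {xj}. closer xi y)" "w \<notin> voronoi C xi"
    using \<open>S \<subseteq> C\<close> by (auto simp: represents_def)
  then have "w \<notin> closer xi xj"
    using V by blast
  then obtain z where "dist z xi = dist z xj" "\<And>y. y \<in> S - {xj} \<Longrightarrow> y \<noteq> xi \<Longrightarrow> dist z xi < dist z y"
    using exists_equidistant_point_strictly_closer[OF \<open>xj \<noteq> xi\<close> _ w(1)] by blast
  then have "xj \<in> neighbors C xi"
    using equidistant_point_strictly_closer_imp_neighbor[OF \<open>finite S\<close> V] \<open>xj \<in> S\<close> \<open>S \<subseteq> C\<close> \<open>xj \<noteq> xi\<close>
    by blast
  with \<open>n \<bullet> (xj - xi) > 0\<close> show ?thesis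
    using that by blast
qed

section \<open>Polyhedral angles\<close>

definition polyhedral_angle :: "(real^2) set \<Rightarrow> real^2 \<Rightarrow> real^2 \<Rightarrow> bool" where
  "polyhedral_angle K u w \<longleftrightarrow> closed K \<and> convex_cone K \<and> K \<inter> uminus ` K = {0} \<and> K \<noteq> {0}
     \<and> u \<noteq> 0 \<and> w \<noteq> 0 \<and> frontier K = {t *\<^sub>R u | t. t \<ge> 0} \<union> {t *\<^sub>R w | t. t \<ge> 0}"

lemma halfline_eq_ray:
  fixes p a u :: "real^2"
  assumes "p \<noteq> 0" "p \<bullet> u = 0" "a \<bullet> u < 0"
  shows "{v. p \<bullet> v = 0 \<and> a \<bullet> v \<le> 0} = {t *\<^sub>R u | t. t \<ge> 0}"
proof (intro set_eqI iffI; clarsimp)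
  fix v assume "p \<bullet> v = 0" "a \<bullet> v \<le> 0"
  moreover have "u \<noteq> 0"
    using assms(3) by auto
  ultimately obtain s where "v = s *\<^sub>R u"
    using common_normal_imp_parallel[of p u v] assms(1,2) by blast
  moreover from this \<open>a \<bullet> v \<le> 0\<close> assms(3) have "s \<ge> 0"
    by (simp add: mult_le_0_iff)
  ultimately show "\<exists>t. v = t *\<^sub>R u \<and> 0 \<le> t"
    by blast
qed (use assms(2,3) in \<open>auto simp: mult_nonneg_nonpos\<close>)

lemma frontier_halfspaces_Int:
  fixes p q :: "'a::euclidean_space"
  assumes "p \<noteq> 0" "q \<noteq> 0"
  shows "frontier {v. p \<bullet> v \<le> 0 \<and> q \<bullet> v \<le> 0}
           = {v. p \<bullet> v = 0 \<and> q \<bullet> v \<le> 0} \<union> {v. q \<bullet> v = 0 \<and> p \<bullet> v \<le> 0}"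
proof -
  define K where "K = {v. p \<bullet> v \<le> 0 \<and> q \<bullet> v \<le> 0}"
  have K_Int: "K = {v. p \<bullet> v \<le> 0} \<inter> {v. q \<bullet> v \<le> 0}"
    by (auto simp: K_def)
  have "closed K"
    unfolding K_Int by (intro closed_Int closed_halfspace_le)
  have interior: "interior K = {v. p \<bullet> v < 0} \<inter> {v. q \<bullet> v < 0}"
    unfolding K_Int interior_Int using assms by simp
  show ?thesis
    unfolding K_def[symmetric] frontier_def closure_closed[OF \<open>closed K\<close>] interior
    by (auto simp: K_def)
qed

lemma polyhedral_angle_wedge:
  assumes "cross2 p q \<noteq> 0"
  shows "polyhedral_angle {v. p \<bullet> v \<le> 0 \<and> q \<bullet> v \<le> 0}
           ((- cross2 p q) *\<^sub>R rot90 p) (cross2 p q *\<^sub>R rot90 q)"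
proof -
  define c where "c = cross2 p q"
  define K where "K = {v. p \<bullet> v \<le> 0 \<and> q \<bullet> v \<le> 0}"
  define u where "u = (- c) *\<^sub>R rot90 p"
  define w where "w = c *\<^sub>R rot90 q"
  have "p \<noteq> 0" "q \<noteq> 0" "c\<^sup>2 > 0"
    using assms by (auto simp: c_def cross2_def)
  have u: "p \<bullet> u = 0" "q \<bullet> u < 0" and w: "q \<bullet> w = 0" "p \<bullet> w < 0"
    using \<open>c\<^sup>2 > 0\<close>
    by (simp_all add: u_def w_def inner_rot90_right c_def power2_eq_square cross2_antisym[of q p])
  have "closed K"
    unfolding K_def by (intro closed_Collect_conj closed_halfspace_le)
  moreover have "convex_cone K"
    unfolding convex_cone_iff by (auto simp: K_def inner_add_right mult_nonneg_nonpos)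
  moreover have "K \<inter> uminus ` K = {0}"
  proof -
    have "v = 0" if "p \<bullet> v = 0" "q \<bullet> v = 0" for v
      using cross2_eq_0_if_common_normal[of v p q] assms that by (auto simp: inner_commute)
    then show ?thesis
      by (force simp: K_def)
  qed
  moreover have "u \<in> K" "u \<noteq> 0" "w \<noteq> 0"
    using u w by (auto simp: K_def)
  moreover have "frontier K = {t *\<^sub>R u | t. t \<ge> 0} \<union> {t *\<^sub>R w | t. t \<ge> 0}"
    using frontier_halfspaces_Int[OF \<open>p \<noteq> 0\<close> \<open>q \<noteq> 0\<close>]
      halfline_eq_ray[OF \<open>p \<noteq> 0\<close> u] halfline_eq_ray[OF \<open>q \<noteq> 0\<close> w]
    by (simp add: K_def)
  ultimately show ?thesis
    unfolding polyhedral_angle_def c_def[symmetric] u_def[symmetric] w_def[symmetric] K_def[symmetric]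
    by blast
qed

lemma polyhedral_angle_halfline:
  assumes "p \<noteq> 0" "n \<noteq> 0" "p \<bullet> n = 0"
  shows "polyhedral_angle {v. p \<bullet> v = 0 \<and> n \<bullet> v \<le> 0} (- n) (- n)"
proof -
  define K where "K = {v. p \<bullet> v = 0 \<and> n \<bullet> v \<le> 0}"
  have K_ray: "K = {t *\<^sub>R (- n) | t. t \<ge> 0}"
    unfolding K_def using assms by (intro halfline_eq_ray) auto
  have "closed K"
    unfolding K_def by (intro closed_Collect_conj closed_hyperplane closed_halfspace_le)
  moreover have "convex_cone K"
    unfolding convex_cone_iff by (auto simp: K_def inner_add_right mult_nonneg_nonpos)
  moreover have "K \<inter> uminus ` K = {0}"
  proof -
    have "v = 0" if pv: "p \<bullet> v = 0" and nv: "n \<bullet> v = 0" for v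
    proof -
      obtain s where "v = s *\<^sub>R n"
        using common_normal_imp_parallel[of p n v] assms pv by blast
      with nv assms(2) show ?thesis
        by simp
    qed
    then show ?thesis
      by (force simp: K_def)
  qed
  moreover have "- n \<in> K"
    using assms(3) by (simp add: K_def)
  moreover have "interior K \<subseteq> interior {v. p \<bullet> v = 0}"
    by (rule interior_mono) (auto simp: K_def)
  with \<open>closed K\<close> assms(1) have "frontier K = {t *\<^sub>R (- n) | t. t \<ge> 0} \<union> {t *\<^sub>R (- n) | t. t \<ge> 0}"
    by (simp add: frontier_def K_ray)
  ultimately show ?thesis
    using assms(2) unfolding polyhedral_angle_def K_def[symmetric] by auto
qed

lemma dpcir_at_hull_vertex:
  assumes "constellation C" "xi \<in> C" "hull_adjacent C xi xp" "hull_adjacent C xi xq"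
    and "cross2 (xp - xi) (xq - xi) \<noteq> 0"
  obtains K u w where "polyhedral_angle K u w" "dpcir C xi = (\<lambda>v. xi + v) ` K"
    "u \<bullet> (xi - xp) = 0" "w \<bullet> (xi - xq) = 0"
proof -
  define p where "p = xp - xi"
  define q where "q = xq - xi"
  define D where "D = (\<lambda>y. y - xi) ` neighbors C xi"
  obtain n1 where n1: "n1 \<noteq> 0" "n1 \<bullet> p = 0" "\<And>y. y \<in> C \<Longrightarrow> n1 \<bullet> (y - xi) \<ge> 0"
    using hull_adjacent_supporting_normal[OF assms(1,2,3)] unfolding p_def by blast
  obtain n2 where n2: "n2 \<noteq> 0" "n2 \<bullet> q = 0" "\<And>y. y \<in> C \<Longrightarrow> n2 \<bullet> (y - xi) \<ge> 0"
    using hull_adjacent_supporting_normal[OF assms(1,2,4)] unfolding q_def by blast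
  have "xp \<in> C" "xq \<in> C"
    using assms(3,4) by (auto simp: hull_adjacent_def)
  have "p \<in> D" "q \<in> D"
    using hull_adjacent_imp_neighbor[OF assms(1,2)] assms(3,4) by (auto simp: D_def p_def q_def)
  have "n1 \<bullet> q \<ge> 0" "n2 \<bullet> p \<ge> 0"
    using n1(3)[OF \<open>xq \<in> C\<close>] n2(3)[OF \<open>xp \<in> C\<close>] by (simp_all add: p_def q_def)
  have "\<exists>\<alpha> \<beta>. \<alpha> \<ge> 0 \<and> \<beta> \<ge> 0 \<and> d = \<alpha> *\<^sub>R p + \<beta> *\<^sub>R q" if "d \<in> D" for d
  proof -
    obtain y where "y \<in> C" "d = y - xi"
      using \<open>d \<in> D\<close> by (auto simp: D_def neighbors_def)
    then have "n1 \<bullet> d \<ge> 0" "n2 \<bullet> d \<ge> 0"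
      using n1(3) n2(3) by simp_all
    with assms(5) n1(1,2) n2(1,2) \<open>n1 \<bullet> q \<ge> 0\<close> \<open>n2 \<bullet> p \<ge> 0\<close> show ?thesis
      unfolding p_def q_def by (intro nonneg_combination_if_supporting_normals)
  qed
  then have "{v. \<forall>d\<in>D. d \<bullet> v \<le> 0} = {v. p \<bullet> v \<le> 0 \<and> q \<bullet> v \<le> 0}"
    using \<open>p \<in> D\<close> \<open>q \<in> D\<close> by (intro polar_of_two_generators)
  then have "dpcir C xi = (\<lambda>v. xi + v) ` {v. p \<bullet> v \<le> 0 \<and> q \<bullet> v \<le> 0}"
    unfolding dpcir_eq_translated_polar D_def[symmetric] by (rule arg_cong)
  moreover have "((- cross2 p q) *\<^sub>R rot90 p) \<bullet> (xi - xp) = 0" "(cross2 p q *\<^sub>R rot90 q) \<bullet> (xi - xq) = 0"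
  proof -
    have "xi - xp = - p" "xi - xq = - q"
      by (simp_all add: p_def q_def)
    then show "((- cross2 p q) *\<^sub>R rot90 p) \<bullet> (xi - xp) = 0" "(cross2 p q *\<^sub>R rot90 q) \<bullet> (xi - xq) = 0"
      by (simp_all add: inner_rot90_left)
  qed
  ultimately show ?thesis
    using polyhedral_angle_wedge assms(5) that unfolding p_def q_def by blast
qed

lemma dpcir_at_hull_edge_point:
  assumes "constellation C" "xi \<in> C" "hull_adjacent C xi xp" "hull_adjacent C xi xq" "xp \<noteq> xq"
    and "cross2 (xp - xi) (xq - xi) = 0"
  obtains K u w where "polyhedral_angle K u w" "dpcir C xi = (\<lambda>v. xi + v) ` K"
    "u \<bullet> (xi - xp) = 0" "w \<bullet> (xi - xq) = 0"
proof -
  define p where "p = xp - xi"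
  define D where "D = (\<lambda>y. y - xi) ` neighbors C xi"
  have xp: "xp \<in> C" "xp \<noteq> xi" "open_segment xi xp \<inter> C = {}"
    and xq: "xq \<in> C" "xq \<noteq> xi" "open_segment xi xq \<inter> C = {}"
    using assms(3,4) by (auto simp: hull_adjacent_def)
  have "p \<noteq> 0"
    using xp by (simp add: p_def)
  obtain \<mu> where \<mu>: "xq - xi = \<mu> *\<^sub>R p"
    using cross2_eq_0_imp_parallel[OF assms(6)] xp unfolding p_def by force
  have "xq \<notin> open_segment xi xp" "xp \<notin> open_segment xi xq"
    using xp xq by blast+
  with \<mu> xp(2) xq(2) assms(5) have "\<mu> < 0"
    unfolding p_def by (intro parallel_not_between_imp_opposite)
  obtain n where n: "n \<noteq> 0" "n \<bullet> p = 0" "\<And>y. y \<in> C \<Longrightarrow> n \<bullet> (y - xi) \<ge> 0"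
    using hull_adjacent_supporting_normal[OF assms(1,2,3)] unfolding p_def by blast
  have "\<not> collinear C"
    using assms(1) by (simp add: constellation_def)
  then obtain y0 where "y0 \<in> C" "n \<bullet> y0 \<noteq> n \<bullet> xi"
    using n(1) by (rule not_collinear_imp_off_hyperplane)
  with n(3) have "n \<bullet> (y0 - xi) > 0"
    by (force simp: inner_diff_right)
  then obtain xj where "xj \<in> neighbors C xi" "n \<bullet> (xj - xi) > 0"
    using exists_neighbor_on_strict_side[OF _ assms(2) n(3) \<open>y0 \<in> C\<close>] assms(1)
    by (auto simp: constellation_def)
  have "p \<in> D" "\<mu> *\<^sub>R p \<in> D"
    using hull_adjacent_imp_neighbor[OF assms(1,2)] assms(3,4) \<mu>[symmetric]
    by (auto simp: D_def p_def)
  moreover have "n \<bullet> d \<ge> 0" if "d \<in> D" for d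
    using that n(3) by (auto simp: D_def neighbors_def)
  ultimately have "{v. \<forall>d\<in>D. d \<bullet> v \<le> 0} = {v. p \<bullet> v = 0 \<and> n \<bullet> v \<le> 0}"
    using \<open>\<mu> < 0\<close> \<open>p \<noteq> 0\<close> n(2) \<open>xj \<in> neighbors C xi\<close> \<open>n \<bullet> (xj - xi) > 0\<close>
    by (intro polar_of_opposite_generators[where e = "xj - xi"]) (auto simp: D_def)
  then have "dpcir C xi = (\<lambda>v. xi + v) ` {v. p \<bullet> v = 0 \<and> n \<bullet> v \<le> 0}"
    unfolding dpcir_eq_translated_polar D_def[symmetric] by (rule arg_cong)
  moreover have "polyhedral_angle {v. p \<bullet> v = 0 \<and> n \<bullet> v \<le> 0} (- n) (- n)"
    using \<open>p \<noteq> 0\<close> n(1,2) by (intro polyhedral_angle_halfline) (simp_all add: inner_commute)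
  moreover have "(- n) \<bullet> (xi - xp) = 0" "(- n) \<bullet> (xi - xq) = 0"
  proof -
    have "xi - xp = - p" "xi - xq = - (\<mu> *\<^sub>R p)"
      by (simp add: p_def) (simp flip: \<mu>)
    with n(2) show "(- n) \<bullet> (xi - xp) = 0" "(- n) \<bullet> (xi - xq) = 0"
      by simp_all
  qed
  ultimately show ?thesis
    using that by blast
qed

theorem lemma2:
  fixes C :: "pt set" and xi xp xq :: pt
  assumes "constellation C"
    and "xi \<in> C"
    and "\<not> bounded (voronoi C xi)"
    and "hull_adjacent C xi xp" and "hull_adjacent C xi xq" and "xp \<noteq> xq"
  shows "\<exists>K :: pt set. closed K \<and> convex_cone K \<and> K \<inter> uminus ` K = {0} \<and> K \<noteq> {0}
           \<and> dpcir C xi = (\<lambda>v. xi + v) ` K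
           \<and> (\<exists>u w. u \<noteq> 0 \<and> w \<noteq> 0 \<and> u \<bullet> (xi - xp) = 0 \<and> w \<bullet> (xi - xq) = 0
                 \<and> frontier K = {t *\<^sub>R u | t. t \<ge> 0} \<union> {t *\<^sub>R w | t. t \<ge> 0})"
proof -
  obtain K u w where "polyhedral_angle K u w" "dpcir C xi = (\<lambda>v. xi + v) ` K"
    "u \<bullet> (xi - xp) = 0" "w \<bullet> (xi - xq) = 0"
  proof (cases "cross2 (xp - xi) (xq - xi) = 0")
    case True
    with dpcir_at_hull_edge_point[OF assms(1,2,4-6)] that show ?thesis
      by blast
  next
    case False
    with dpcir_at_hull_vertex[OF assms(1,2,4,5)] that show ?thesis
      by blast
  qed
  then show ?thesis
    unfolding polyhedral_angle_def by blast
qed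

end
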